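(* The schema $\langle[G\cup H]\rangle\varphi\rightarrow\langle[G]\rangle\langle[H]\rangle\varphi$ is not valid: with $A=\{a,b,c\}$, $G=\{a\}$, $H=\{b\}$, $P\supseteq\{p,q,r\}$ and $\varphi:=K_b(p\wedge q\wedge r)\wedge\neg K_a(p\wedge q\wedge r)\wedge\neg K_c(p\wedge q\wedge r)$, there is a pointed epistemic model $(M,w)$ with $(M,w)\models\langle[\{a,b\}]\rangle\varphi$ and $(M,w)\not\models\langle[\{a\}]\rangle\langle[\{b\}]\rangle\varphi$. (For instance, $W=\{pqr,pq\bar r,\bar pqr,p\bar qr\}$ with each state's name giving the truth values of $p,q,r$, $w=pqr$, $\sim_a$ identifying $pqr$ and $\bar pqr$, $\sim_b$ identifying $pqr$ and $p\bar qr$, $\sim_c$ identifying $pqr$, $pq\bar r$, $\bar pqr$, all relations reflexive otherwise.)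
   Context: Fix a finite set $A$ of agents and a countable set $P$ of propositional variables. The language $\mathcal{L}_{CoRGAL}$ is given by $\varphi ::= p \mid \neg\varphi \mid (\varphi\wedge\varphi) \mid K_a\varphi \mid [\varphi]\varphi \mid [G,\varphi]\varphi \mid [\langle G\rangle]\varphi$ with $p\in P$, $a\in A$, $G\subseteq A$. $\mathcal{L}_{EL}$ is the fragment built only from $p,\neg,\wedge,K_a$. Duals: $\langle\psi\rangle\varphi:=\neg[\psi]\neg\varphi$, $\langle[G]\rangle\varphi:=\neg[\langle G\rangle]\neg\varphi$. For $G\subseteq A$, $\mathcal{L}^G_{EL}$ is the set of formulas $\bigwedge_{i\in G}K_i\varphi_i$ with each $\varphi_i\in\mathcal{L}_{EL}$; $\psi_G,\chi_G$ range over $\mathcal{L}^G_{EL}$. Epistemic models $M=(W,\sim,V)$: $W\neq\emptyset$, each $\sim_a$ an equivalence relation, $V:P\to\mathcal{P}(W)$; $M^\varphi$ is the restriction of $M$ to $\{v:(M,v)\models\varphi\}$. Semantics: standard for $p,\neg,\wedge,K_a$; $(M,w)\models[\varphi]\psi$ iff $(M,w)\models\varphi$ implies $(M^\varphi,w)\models\psi$; $(M,w)\models[\langle G\rangle]\varphi$ iff for every $\psi_G$ there is $\chi_{A\setminus G}$ with $(M,w)\models\psi_G\to\langle\psi_G\wedge\chi_{A\setminus G}\rangle\varphi$. Thus $(M,w)\models\langle[G]\rangle\varphi$ iff there is $\psi_G$ such that for all $\chi_{A\setminus G}$, $(M,w)\models\psi_G\wedge[\psi_G\wedge\chi_{A\setminus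 G}]\varphi$. A formula is valid if true at every pointed model. *)

theory Defs
  imports Main
begin

(* Agents: A = {a,b,c}; propositional variables: P = nat (countable), p = 0, q = 1, r = 2 *)
datatype agent = Aa | Ab | Ac

datatype 'a fm =
    Atom nat
  | Neg "'a fm"
  | Conj "'a fm" "'a fm"
  | K 'a "'a fm"
  | Ann "'a fm" "'a fm"
  | Coal "'a set" "'a fm"

fun is_EL :: "'a fm \<Rightarrow> bool" where
  "is_EL (Atom p) = True"
| "is_EL (Neg f) = is_EL f"
| "is_EL (Conj f g) = (is_EL f \<and> is_EL g)"
| "is_EL (K a f) = is_EL f"
| "is_EL (Ann f g) = False"
| "is_EL (Coal G f) = False"

record ('a, 'w) model =
  W :: "'w set"
  R :: "'a \<Rightarrow> ('w \<times> 'w) set"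
  V :: "nat \<Rightarrow> 'w set"

definition is_model :: "('a, 'w) model \<Rightarrow> bool" where
  "is_model M \<longleftrightarrow> W M \<noteq> {} \<and> (\<forall>a. equiv (W M) (R M a)) \<and> (\<forall>p. V M p \<subseteq> W M)"

definition restrict :: "('a, 'w) model \<Rightarrow> 'w set \<Rightarrow> ('a, 'w) model" where
  "restrict M S = \<lparr> W = W M \<inter> S, R = (\<lambda>a. R M a \<inter> (S \<times> S)), V = (\<lambda>p. V M p \<inter> S) \<rparr>"

(* semantics of the epistemic fragment L_EL (only meaningful on is_EL formulas) *)
fun sat_el :: "('a, 'w) model \<Rightarrow> 'w \<Rightarrow> 'a fm \<Rightarrow> bool" where
  "sat_el M w (Atom p) = (w \<in> V M p)"
| "sat_el M w (Neg f) = (\<not> sat_el M w f)"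
| "sat_el M w (Conj f g) = (sat_el M w f \<and> sat_el M w g)"
| "sat_el M w (K a f) = (\<forall>v\<in>W M. (w, v) \<in> R M a \<longrightarrow> sat_el M v f)"
| "sat_el M w (Ann f g) = False"
| "sat_el M w (Coal G f) = False"

definition sat_KG :: "('a, 'w) model \<Rightarrow> 'w \<Rightarrow> 'a set \<Rightarrow> ('a \<Rightarrow> 'a fm) \<Rightarrow> bool" where
  "sat_KG M w G f \<longleftrightarrow> (\<forall>i\<in>G. sat_el M w (K i (f i)))"

fun sat :: "('a, 'w) model \<Rightarrow> 'w \<Rightarrow> 'a fm \<Rightarrow> bool" where
  "sat M w (Atom p) = (w \<in> V M p)"
| "sat M w (Neg f) = (\<not> sat M w f)"
| "sat M w (Conj f g) = (sat M w f \<and> sat M w g)"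
| "sat M w (K a f) = (\<forall>v\<in>W M. (w, v) \<in> R M a \<longrightarrow> sat M v f)"
| "sat M w (Ann f g) =
     (sat M w f \<longrightarrow> sat (restrict M {v \<in> W M. sat M v f}) w g)"
| "sat M w (Coal G f) =
     (\<forall>psi. (\<forall>i. is_EL (psi i)) \<longrightarrow>
        (\<exists>chi. (\<forall>i. is_EL (chi i)) \<and>
           (sat_KG M w G psi \<longrightarrow>
              (sat_KG M w G psi \<and> sat_KG M w (UNIV - G) chi \<and>
               sat (restrict M {v \<in> W M. sat_KG M v G psi \<and> sat_KG M v (UNIV - G) chi}) w f))))"

definition DCoal :: "'a set \<Rightarrow> 'a fm \<Rightarrow> 'a fm" where
  "DCoal G f = Neg (Coal G (Neg f))"

definition pqr :: "agent fm" where
  "pqr = Conj (Atom 0) (Conj (Atom 1) (Atom 2))"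

definition phi7 :: "agent fm" where
  "phi7 = Conj (K Ab pqr) (Conj (Neg (K Aa pqr)) (Neg (K Ac pqr)))"

end

theory Submission
  imports Defs
begin

text \<open>
  Agents a and b jointly announce K_a q, which removes p\<not>qr, so b comes to know pqr; agent c
  cannot interfere, because every K_c-announcement true at pqr is also true at the two worlds c
  confuses with it, so a still considers \<not>pqr and c still considers pq\<not>r possible.
  Acting first and alone, a cannot prevent b and c from announcing K_b (p \<and> r), which removes
  \<not>pqr; from then on a knows pqr, and no later announcement can undo that.
\<close>

definition fm_true :: "'a fm" where
  "fm_true = Neg (Conj (Atom 0) (Neg (Atom 0)))"

lemma is_EL_fm_true [simp]: "is_EL fm_true"
  by (simp add: fm_true_def)

lemma sat_KG_fm_true [simp]: "sat_KG M w G (\<lambda>_. fm_true)"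
  by (simp add: sat_KG_def fm_true_def)

lemma sat_DCoal:
  "sat M w (DCoal G f) \<longleftrightarrow>
     (\<exists>psi. (\<forall>i. is_EL (psi i)) \<and> sat_KG M w G psi \<and>
        (\<forall>chi. (\<forall>i. is_EL (chi i)) \<longrightarrow> sat_KG M w (UNIV - G) chi \<longrightarrow>
           sat (restrict M {v \<in> W M. sat_KG M v G psi \<and> sat_KG M v (UNIV - G) chi}) w f))"
  unfolding DCoal_def sat.simps(2) sat.simps(6)
  using is_EL_fm_true by blast

lemma not_sat_DCoal_if_not_sat_restrict:
  assumes "\<And>S. \<not> sat (restrict M S) w f"
  shows "\<not> sat M w (DCoal G f)"
proof
  assume "sat M w (DCoal G f)"
  then obtain psi where "\<forall>chi. (\<forall>i. is_EL (chi i)) \<longrightarrow> sat_KG M w (UNIV - G) chi \<longrightarrow>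
      sat (restrict M {v \<in> W M. sat_KG M v G psi \<and> sat_KG M v (UNIV - G) chi}) w f"
    unfolding sat_DCoal by blast
  from this[rule_format, of "\<lambda>_. fm_true"] assms show False
    by simp
qed

lemma sat_el_K_cong:
  assumes "equiv (W M) (R M a)" and "(w, v) \<in> R M a"
  shows "sat_el M w (K a f) \<longleftrightarrow> sat_el M v (K a f)"
proof -
  have "(w, u) \<in> R M a \<longleftrightarrow> (v, u) \<in> R M a" for u
    using assms by (meson equivE symE transE)
  then show ?thesis by simp
qed

text \<open>Worlds 0, 1, 2, 3 are pqr, pq\<not>r, \<not>pqr, p\<not>qr.\<close>

definition M0 :: "(agent, nat) model" where
  "M0 = \<lparr> W = {0, 1, 2, 3},
          R = (\<lambda>a. Id_on {0, 1, 2, 3} \<union>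
                  (case a of Aa \<Rightarrow> {(0, 2), (2, 0)}
                           | Ab \<Rightarrow> {(0, 3), (3, 0)}
                           | Ac \<Rightarrow> {0, 1, 2} \<times> {0, 1, 2})),
          V = (\<lambda>p. if p = 0 then {0, 1, 3} else if p = 1 then {0, 1, 2}
                   else if p = 2 then {0, 2, 3} else {}) \<rparr>"

lemma M0_simps [simp]:
  "W M0 = {0, 1, 2, 3}"
  "R M0 Aa = Id_on {0, 1, 2, 3} \<union> {(0, 2), (2, 0)}"
  "R M0 Ab = Id_on {0, 1, 2, 3} \<union> {(0, 3), (3, 0)}"
  "R M0 Ac = Id_on {0, 1, 2, 3} \<union> {0, 1, 2} \<times> {0, 1, 2}"
  "V M0 0 = {0, 1, 3}" "V M0 (Suc 0) = {0, 1, 2}" "V M0 2 = {0, 2, 3}"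
  by (simp_all add: M0_def)

lemma is_model_M0: "is_model M0"
  unfolding is_model_def
proof (intro conjI allI)
  fix a
  show "equiv (W M0) (R M0 a)"
    by (cases a) (auto simp: equiv_def refl_on_def sym_def trans_def)
qed (auto simp: M0_def)

lemma UNIV_agent: "(UNIV :: agent set) = {Aa, Ab, Ac}"
  using agent.exhaust by auto

lemma sat_DCoal_ab_phi7: "sat M0 0 (DCoal {Aa, Ab} phi7)"
proof -
  define psi :: "agent \<Rightarrow> agent fm" where "psi = (\<lambda>i. if i = Aa then Atom 1 else fm_true)"
  have psi_EL: "\<forall>i. is_EL (psi i)"
    by (simp add: psi_def)
  have psi_holds: "sat_KG M0 v {Aa, Ab} psi" if "v \<in> {0, 1, 2}" for v
    using that by (auto simp: sat_KG_def psi_def fm_true_def)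
  have psi_fails: "\<not> sat_KG M0 3 {Aa, Ab} psi"
    by (auto simp: sat_KG_def psi_def)
  have complement: "UNIV - {Aa, Ab} = {Ac}"
    using UNIV_agent by auto
  have "sat (restrict M0 {v \<in> W M0. sat_KG M0 v {Aa, Ab} psi \<and> sat_KG M0 v {Ac} chi}) 0 phi7"
    if chi_0: "sat_KG M0 0 {Ac} chi" for chi
  proof -
    have "sat_KG M0 v {Ac} chi" if "v \<in> {0, 1, 2}" for v
      using chi_0 that sat_el_K_cong[of M0 Ac 0 v "chi Ac"] is_model_M0
      by (auto simp: sat_KG_def is_model_def)
    then have survivors: "{v \<in> W M0. sat_KG M0 v {Aa, Ab} psi \<and> sat_KG M0 v {Ac} chi} = {0, 1, 2}"
      using psi_holds psi_fails by auto
    show ?thesis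
      unfolding survivors by (auto simp: phi7_def pqr_def restrict_def)
  qed
  then show ?thesis
    unfolding sat_DCoal complement using psi_EL psi_holds[of 0] by blast
qed

lemma not_sat_DCoal_a_DCoal_b_phi7: "\<not> sat M0 0 (DCoal {Aa} (DCoal {Ab} phi7))"
proof -
  define chi :: "agent \<Rightarrow> agent fm" where
    "chi = (\<lambda>i. if i = Ab then Conj (Atom 0) (Atom 2) else fm_true)"
  have chi_EL: "\<forall>i. is_EL (chi i)"
    by (simp add: chi_def)
  have complement: "UNIV - {Aa} = {Ab, Ac}"
    using UNIV_agent by auto
  have chi_holds: "sat_KG M0 0 {Ab, Ac} chi"
    by (auto simp: sat_KG_def chi_def fm_true_def)
  have chi_fails: "\<not> sat_KG M0 2 {Ab, Ac} chi"
    by (auto simp: sat_KG_def chi_def)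
  have a_knows_pqr: "\<not> sat (restrict M0 S) 0 (DCoal {Ab} phi7)" if "2 \<notin> S" "S \<subseteq> W M0" for S
  proof (rule not_sat_DCoal_if_not_sat_restrict)
    fix T
    have "sat (restrict (restrict M0 S) T) 0 (K Aa pqr)"
      using that by (auto simp: pqr_def restrict_def)
    then show "\<not> sat (restrict (restrict M0 S) T) 0 phi7"
      by (simp add: phi7_def)
  qed
  show ?thesis
    unfolding sat_DCoal[of M0 0 "{Aa}"] complement
  proof (intro notI, elim exE conjE)
    fix psi
    let ?S = "{v \<in> W M0. sat_KG M0 v {Aa} psi \<and> sat_KG M0 v {Ab, Ac} chi}"
    assume "\<forall>chi. (\<forall>i. is_EL (chi i)) \<longrightarrow> sat_KG M0 0 {Ab, Ac} chi \<longrightarrow>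
              sat (restrict M0 {v \<in> W M0. sat_KG M0 v {Aa} psi \<and> sat_KG M0 v {Ab, Ac} chi})
                0 (DCoal {Ab} phi7)"
    from this[rule_format, OF chi_EL[rule_format] chi_holds] show False
      using a_knows_pqr[of ?S] chi_fails by blast
  qed
qed

theorem mainTheorem7:
  shows "\<exists>(M :: (agent, nat) model) w. is_model M \<and> w \<in> W M \<and>
           sat M w (DCoal {Aa, Ab} phi7) \<and>
           \<not> sat M w (DCoal {Aa} (DCoal {Ab} phi7))"
  using is_model_M0 sat_DCoal_ab_phi7 not_sat_DCoal_a_DCoal_b_phi7
  by (intro exI[of _ M0] exI[of _ 0]) auto

end
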